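(* For every finite abelian $p$-group $H$, $N_{\mathrm{typical}}(H,\mathbb{F}_p)=0$, where $\mathbb{F}_p$ carries the trivial action.
   Context: For a finite abelian group $D$, subgroup $I$ with $D/I$ cyclic and finite $D$-module $M$: $\widehat D:=\hat{\mathbb{Z}}\times_{D/I}D$, $R(D,I,M):=\ker(H^2(D,M)\xrightarrow{\inf}H^2(\widehat D,M))$. $\mathcal{C}$ is the set of pairs $(D,I)$ with $D\le H$ generated by at most two elements, $I\le D$ cyclic with $D/I$ cyclic. $N_{\mathrm{typical}}(H,M):=\ker\bigl(H^2(H,M)\to\bigoplus_{(D,I)\in\mathcal{C}}H^2(D,M)/R(D,I,M)\bigr)$ (restriction maps). *)

theory Defs
  imports "HOL-Algebra.Algebra" "HOL-Computational_Algebra.Primes"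
begin

text \<open>Profinite integers: compatible systems of residues, a n in [0,n), a 0 = 0.\<close>
definition Zhat :: "(nat \<Rightarrow> int) set" where
  "Zhat = {a. a 0 = 0 \<and> (\<forall>n>0. 0 \<le> a n \<and> a n < int n)
             \<and> (\<forall>n>0. \<forall>k>0. k dvd n \<longrightarrow> a n mod int k = a k)}"

definition zhat_add :: "(nat \<Rightarrow> int) \<Rightarrow> (nat \<Rightarrow> int) \<Rightarrow> nat \<Rightarrow> int" where
  "zhat_add a b = (\<lambda>n. (a n + b n) mod int n)"

definition quot_generator :: "('g,'b) monoid_scheme \<Rightarrow> 'g set \<Rightarrow> 'g set \<Rightarrow> 'g \<Rightarrow> bool" where
  "quot_generator G D I t \<longleftrightarrow> t \<in> D \<and>
     (\<forall>d\<in>D. \<exists>k::nat. d \<otimes>\<^bsub>G\<^esub> inv\<^bsub>G\<^esub> (t [^]\<^bsub>G\<^esub> k) \<in> I)"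

text \<open>Fibre product hatD = Zhat x_{D/I} D, where Zhat -> D/I sends 1 to the coset t I.\<close>
definition hatD :: "('g,'b) monoid_scheme \<Rightarrow> 'g set \<Rightarrow> 'g set \<Rightarrow> 'g \<Rightarrow> ((nat \<Rightarrow> int) * 'g) set" where
  "hatD G D I t = {(a, d). a \<in> Zhat \<and> d \<in> D \<and>
     d \<otimes>\<^bsub>G\<^esub> inv\<^bsub>G\<^esub> (t [^]\<^bsub>G\<^esub> nat (a (card D div card I))) \<in> I}"

definition hatD_mult :: "('g,'b) monoid_scheme \<Rightarrow> ((nat \<Rightarrow> int) * 'g) \<Rightarrow> ((nat \<Rightarrow> int) * 'g) \<Rightarrow> ((nat \<Rightarrow> int) * 'g)" where
  "hatD_mult G x y = (zhat_add (fst x) (fst y), snd x \<otimes>\<^bsub>G\<^esub> snd y)"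

text \<open>Inhomogeneous 2-cocycles / 2-coboundaries with values in F_p (trivial action),
  F_p represented by int modulo p.\<close>
definition cocycle2 :: "nat \<Rightarrow> 'x set \<Rightarrow> ('x \<Rightarrow> 'x \<Rightarrow> 'x) \<Rightarrow> ('x \<Rightarrow> 'x \<Rightarrow> int) \<Rightarrow> bool" where
  "cocycle2 p S m f \<longleftrightarrow> (\<forall>g\<in>S. \<forall>h\<in>S. \<forall>k\<in>S.
      (f h k - f (m g h) k + f g (m h k) - f g h) mod int p = 0)"

definition coboundary2 :: "nat \<Rightarrow> 'x set \<Rightarrow> ('x \<Rightarrow> 'x \<Rightarrow> 'x) \<Rightarrow> ('x \<Rightarrow> 'x \<Rightarrow> int) \<Rightarrow> bool" where
  "coboundary2 p S m f \<longleftrightarrow> (\<exists>c. \<forall>g\<in>S. \<forall>h\<in>S.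
      (f g h - (c h - c (m g h) + c g)) mod int p = 0)"

text \<open>Continuous (= locally constant) F_p-valued 1-cochain on hatD.\<close>
definition hatD_continuous :: "nat \<Rightarrow> ((nat \<Rightarrow> int) * 'g) set \<Rightarrow> ((nat \<Rightarrow> int) * 'g \<Rightarrow> int) \<Rightarrow> bool" where
  "hatD_continuous p S c \<longleftrightarrow> (\<forall>x\<in>S. \<exists>N>0. \<forall>y\<in>S.
      fst y N = fst x N \<and> snd y = snd x \<longrightarrow> c y mod int p = c x mod int p)"

text \<open>The class of f restricted to D lies in R(D,I,F_p): its inflation to hatD is a
  continuous coboundary.\<close>
definition in_R :: "('g,'b) monoid_scheme \<Rightarrow> nat \<Rightarrow> 'g set \<Rightarrow> 'g set \<Rightarrow> ('g \<Rightarrow> 'g \<Rightarrow> int) \<Rightarrow> bool" where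
  "in_R G p D I f \<longleftrightarrow> (\<exists>t. quot_generator G D I t \<and>
     (\<exists>c. hatD_continuous p (hatD G D I t) c \<and>
        (\<forall>x\<in>hatD G D I t. \<forall>y\<in>hatD G D I t.
           (f (snd x) (snd y) - (c y - c (hatD_mult G x y) + c x)) mod int p = 0)))"

definition typical_pairs :: "('g,'b) monoid_scheme \<Rightarrow> ('g set * 'g set) set" where
  "typical_pairs G = {(D, I).
     (\<exists>a\<in>carrier G. \<exists>b\<in>carrier G. D = generate G {a, b}) \<and>
     (\<exists>c\<in>D. I = generate G {c}) \<and>
     (\<exists>t. quot_generator G D I t)}"

end

(*
  For a typical pair (<h>, <h>) the inertia group is all of D, and the inflation to \hat D
  restricted to {0} x D shows that f is a coboundary on every cyclic subgroup. For a typical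
  pair (<g, h>, <g>) the group \hat D is abelian and contains lifts of g and of a generator t
  of D/I, so f g t = f t g mod p; since the commutator form f x y - f y x of a cocycle on an
  abelian group is bimultiplicative, it vanishes identically.

  Hence the extension E of H by F_p defined by f is abelian, and the central element 1 of F_p
  is not a p-th power in E: a p-th root would lie over some h with h^p = 1, and the section of E
  over <h> coming from the coboundary on <h> makes every element over h have trivial p-th power.
  In a finite abelian group an element a that is not a p-th power splits off: a subgroup
  maximal among those containing all p-th powers but not a is a complement of <a>. A complement
  of F_p in E is a multiplicative section of E -> H, so f is a coboundary.
*)

theory Submission
  imports Defs
begin

section \<open>Cochains modulo p\<close>

lemma cocycle2_dvd:
  assumes "cocycle2 p S m f" "g \<in> S" "h \<in> S" "k \<in> S"
  shows "int p dvd (f h k - f (m g h) k + f g (m h k) - f g h)"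
  using assms by (simp add: cocycle2_def dvd_eq_mod_eq_0)

text \<open>The function d is the first coordinate of a multiplicative section
  h \<mapsto> (d h, h) of the extension defined by f (see \<open>ext_group\<close> below).\<close>

lemma coboundary2_iff_lift:
  "coboundary2 p S m f \<longleftrightarrow> (\<exists>d. \<forall>g\<in>S. \<forall>h\<in>S. int p dvd (d g + d h + f g h - d (m g h)))"
proof
  assume "coboundary2 p S m f"
  then obtain c where "\<forall>g\<in>S. \<forall>h\<in>S. (f g h - (c h - c (m g h) + c g)) mod int p = 0"
    by (auto simp: coboundary2_def)
  then show "\<exists>d. \<forall>g\<in>S. \<forall>h\<in>S. int p dvd (d g + d h + f g h - d (m g h))"
    by (intro exI[of _ "\<lambda>x. - c x"]) (simp add: dvd_eq_mod_eq_0 algebra_simps)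
next
  assume "\<exists>d. \<forall>g\<in>S. \<forall>h\<in>S. int p dvd (d g + d h + f g h - d (m g h))"
  then obtain d where "\<forall>g\<in>S. \<forall>h\<in>S. int p dvd (d g + d h + f g h - d (m g h))" ..
  then show "coboundary2 p S m f"
    unfolding coboundary2_def by (intro exI[of _ "\<lambda>x. - d x"]) (simp add: dvd_eq_mod_eq_0 algebra_simps)
qed

lemma cocycle2_diff_const:
  "cocycle2 p S m (\<lambda>x y. f x y - k) \<longleftrightarrow> cocycle2 p S m f"
  by (simp add: cocycle2_def algebra_simps)

lemma coboundary2_diff_const:
  "coboundary2 p S m (\<lambda>x y. f x y - k) \<longleftrightarrow> coboundary2 p S m f"
proof
  assume "coboundary2 p S m (\<lambda>x y. f x y - k)"
  then obtain c where "\<forall>g\<in>S. \<forall>h\<in>S. (f g h - k - (c h - c (m g h) + c g)) mod int p = 0"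
    by (auto simp: coboundary2_def)
  then show "coboundary2 p S m f"
    unfolding coboundary2_def by (intro exI[of _ "\<lambda>x. c x + k"]) (simp add: algebra_simps)
next
  assume "coboundary2 p S m f"
  then obtain c where "\<forall>g\<in>S. \<forall>h\<in>S. (f g h - (c h - c (m g h) + c g)) mod int p = 0"
    by (auto simp: coboundary2_def)
  then show "coboundary2 p S m (\<lambda>x y. f x y - k)"
    unfolding coboundary2_def by (intro exI[of _ "\<lambda>x. c x - k"]) (simp add: algebra_simps)
qed

text \<open>In the extension defined by f, the commutator of lifts of x and y is the central
  element \<open>commutator_form f x y\<close>.\<close>

definition commutator_form :: "('x \<Rightarrow> 'x \<Rightarrow> int) \<Rightarrow> 'x \<Rightarrow> 'x \<Rightarrow> int" where
  "commutator_form f x y = f x y - f y x"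

lemma commutator_form_diff_const [simp]:
  "commutator_form (\<lambda>x y. f x y - k) = commutator_form f"
  by (simp add: commutator_form_def fun_eq_iff)

context comm_group
begin

lemma commutator_form_mult_right:
  assumes "cocycle2 p (carrier G) (\<otimes>) f" and "x \<in> carrier G" "y \<in> carrier G" "z \<in> carrier G"
  shows "int p dvd (commutator_form f z (x \<otimes> y) - commutator_form f z x - commutator_form f z y)"
proof -
  have "int p dvd ((f y z - f (x \<otimes> y) z + f x (y \<otimes> z) - f x y)
      - (f z y - f (x \<otimes> z) y + f x (z \<otimes> y) - f x z)
      + (f x y - f (z \<otimes> x) y + f z (x \<otimes> y) - f z x))"
    using assms by (intro dvd_add dvd_diff cocycle2_dvd[of p "carrier G"]) auto
  moreover have "z \<otimes> y = y \<otimes> z" "z \<otimes> x = x \<otimes> z"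
    using assms m_comm by auto
  ultimately show ?thesis
    by (simp add: commutator_form_def algebra_simps)
qed

lemma subgroup_commutator_form_kernel:
  assumes cocycle: "cocycle2 p (carrier G) (\<otimes>) f" and g: "g \<in> carrier G"
  shows "subgroup {x \<in> carrier G. int p dvd commutator_form f g x} G"
proof -
  have one: "int p dvd commutator_form f g \<one>"
    using commutator_form_mult_right[OF cocycle one_closed one_closed g] by simp
  show ?thesis
  proof (rule subgroupI)
    fix x y
    assume x: "x \<in> {x \<in> carrier G. int p dvd commutator_form f g x}"
      and y: "y \<in> {x \<in> carrier G. int p dvd commutator_form f g x}"
    have xc: "x \<in> carrier G" and yc: "y \<in> carrier G"
      using x y by auto
    have "int p dvd (commutator_form f g \<one> - commutator_form f g x - commutator_form f g (inv x))"
      using commutator_form_mult_right[OF cocycle xc inv_closed[OF xc] g] xc by simp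
    moreover have "int p dvd commutator_form f g x"
      using x by simp
    ultimately have "int p dvd commutator_form f g (inv x)"
      using dvd_diff[OF dvd_diff[OF one]] by fastforce
    then show "inv x \<in> {x \<in> carrier G. int p dvd commutator_form f g x}"
      using x by simp
    have "int p dvd (commutator_form f g (x \<otimes> y) - commutator_form f g x - commutator_form f g y)"
      using commutator_form_mult_right[OF cocycle xc yc g] .
    then show "x \<otimes> y \<in> {x \<in> carrier G. int p dvd commutator_form f g x}"
      using x y by (metis (no_types, lifting) diff_add_cancel dvd_add m_closed mem_Collect_eq)
  qed (use one in auto)
qed

end

section \<open>Consequences of the hypothesis on the typical pairs\<close>

definition zhat_zero :: "nat \<Rightarrow> int" where
  "zhat_zero = (\<lambda>_. 0)"

definition zhat_one :: "nat \<Rightarrow> int" where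
  "zhat_one n = (if n = 0 then 0 else 1 mod int n)"

lemma zhat_zero_in_Zhat: "zhat_zero \<in> Zhat"
  by (simp add: Zhat_def zhat_zero_def)

lemma zhat_one_in_Zhat: "zhat_one \<in> Zhat"
  by (auto simp: Zhat_def zhat_one_def mod_mod_cancel)

lemma zhat_add_zero [simp]: "zhat_add zhat_zero zhat_zero = zhat_zero"
  by (simp add: zhat_add_def zhat_zero_def)

lemma zhat_add_commute: "zhat_add a b = zhat_add b a"
  by (simp add: zhat_add_def add.commute)

context group
begin

lemma proper_subgroup_index_ge_2:
  assumes I: "subgroup I G" and D: "subgroup D G" and "I \<subseteq> D" "finite D" "t \<in> D" "t \<notin> I"
  shows "2 \<le> card D div card I"
proof -
  have t: "t \<in> carrier G" and IG: "I \<subseteq> carrier G"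
    using subgroup.mem_carrier[OF D \<open>t \<in> D\<close>] subgroup.subset[OF I] .
  have "I #> t \<subseteq> D"
    using assms by (auto simp: r_coset_def intro: subgroup.m_closed)
  moreover have "I \<inter> (I #> t) = {}"
  proof (rule ccontr)
    assume "I \<inter> (I #> t) \<noteq> {}"
    then obtain x where x: "x \<in> I" "x \<in> I #> t" by blast
    then have "I #> t = I #> x"
      using repr_independence[OF _ t I] by blast
    also have "\<dots> = I"
      using coset_join2[OF _ I x(1)] x(1) IG by blast
    finally show False
      using coset_join1[OF _ t I] \<open>t \<notin> I\<close> by blast
  qed
  moreover have "card (I #> t) = card I"
    using card_rcosets_equal[OF rcosetsI[OF IG t] IG] by simp
  moreover have "finite I" "finite (I #> t)"
    using assms(3,4) \<open>I #> t \<subseteq> D\<close> finite_subset by blast+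
  ultimately have "2 * card I = card (I \<union> (I #> t))"
    by (simp add: card_Un_disjoint)
  also have "\<dots> \<le> card D"
    using \<open>I #> t \<subseteq> D\<close> assms(3,4) by (intro card_mono) auto
  finally have "2 * card I \<le> card D" .
  moreover have "card I > 0"
    using \<open>finite I\<close> subgroup.one_closed[OF I] card_gt_0_iff by blast
  ultimately show ?thesis
    using div_le_mono[of "2 * card I" "card D" "card I"] by simp
qed

lemma inertia_in_hatD:
  assumes "I \<subseteq> carrier G" "I \<subseteq> D" "i \<in> I"
  shows "(zhat_zero, i) \<in> hatD G D I t"
  using assms zhat_zero_in_Zhat by (auto simp: hatD_def zhat_zero_def)

text \<open>If \<open>t \<notin> I\<close>, the lift of t lies over the profinite integer 1: the index of I in D
  is then at least 2, so the component of 1 at the index is 1 and not \<open>1 mod 1 = 0\<close>.\<close>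

lemma generator_in_hatD:
  assumes "subgroup I G" "subgroup D G" "I \<subseteq> D" "finite D" "t \<in> D"
  shows "\<exists>a. (a, t) \<in> hatD G D I t"
proof (cases "t \<in> I")
  case True
  show ?thesis
  proof
    show "(zhat_zero, t) \<in> hatD G D I t"
      using inertia_in_hatD[OF subgroup.subset[OF assms(1)] assms(3) True] .
  qed
next
  case False
  have "t \<in> carrier G"
    using subgroup.mem_carrier[OF assms(2,5)] .
  moreover have "zhat_one (card D div card I) = 1"
    using proper_subgroup_index_ge_2[OF assms False] by (simp add: zhat_one_def)
  ultimately have t_one: "t \<otimes> inv (t [^] nat (zhat_one (card D div card I))) = \<one>"
    by simp
  show ?thesis
  proof
    show "(zhat_one, t) \<in> hatD G D I t"
      using t_one assms(5) zhat_one_in_Zhat subgroup.one_closed[OF assms(1)]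
      by (simp add: hatD_def)
  qed
qed

lemma in_R_imp_coboundary_on_inertia:
  assumes "in_R G p D I f" "I \<subseteq> D" "I \<subseteq> carrier G"
  shows "coboundary2 p I (\<otimes>) f"
proof -
  obtain t c where c: "\<forall>x\<in>hatD G D I t. \<forall>y\<in>hatD G D I t.
      (f (snd x) (snd y) - (c y - c (hatD_mult G x y) + c x)) mod int p = 0"
    using assms(1) unfolding in_R_def by blast
  have "(f i j - (c (zhat_zero, j) - c (zhat_zero, i \<otimes> j) + c (zhat_zero, i))) mod int p = 0"
    if "i \<in> I" "j \<in> I" for i j
    using c[rule_format, OF inertia_in_hatD inertia_in_hatD] assms(2,3) that
    by (simp add: hatD_mult_def)
  then show ?thesis
    unfolding coboundary2_def by (auto intro!: exI[of _ "\<lambda>i. c (zhat_zero, i)"])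
qed

lemma cyclic_typical_pair:
  assumes "h \<in> carrier G"
  shows "(generate G {h}, generate G {h}) \<in> typical_pairs G"
proof -
  have "quot_generator G (generate G {h}) (generate G {h}) h"
    using assms generate_in_carrier[of "{h}"]
    by (auto simp: quot_generator_def intro: generate.incl intro!: exI[of _ 0])
  moreover have "generate G {h} = generate G {h, h}"
    by simp
  ultimately show ?thesis
    using assms unfolding typical_pairs_def by (blast intro: generate.incl)
qed

lemma coboundary_on_cyclic_subgroups:
  assumes "\<forall>(D, I)\<in>typical_pairs G. in_R G p D I f" "h \<in> carrier G"
  shows "coboundary2 p (generate G {h}) (\<otimes>) f"
  using assms cyclic_typical_pair[OF assms(2)] generate_incl[of "{h}"]
  by (auto intro: in_R_imp_coboundary_on_inertia)

end

context comm_group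
begin

lemma hatD_mult_commute:
  assumes "snd x \<in> carrier G" "snd y \<in> carrier G"
  shows "hatD_mult G x y = hatD_mult G y x"
  using assms by (simp add: hatD_mult_def zhat_add_commute m_comm)

lemma in_R_imp_commutator_form_generator:
  assumes "in_R G p D I f" "subgroup I G" "subgroup D G" "I \<subseteq> D" "finite D"
  shows "\<exists>t. quot_generator G D I t \<and> (\<forall>i\<in>I. int p dvd commutator_form f i t)"
proof -
  obtain t c where t: "quot_generator G D I t"
    and c: "\<forall>x\<in>hatD G D I t. \<forall>y\<in>hatD G D I t.
      (f (snd x) (snd y) - (c y - c (hatD_mult G x y) + c x)) mod int p = 0"
    using assms(1) unfolding in_R_def by blast
  have "t \<in> D"
    using t by (simp add: quot_generator_def)
  then obtain a where a: "(a, t) \<in> hatD G D I t"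
    using generator_in_hatD[OF assms(2-5)] by blast
  have "int p dvd commutator_form f i t" if i: "i \<in> I" for i
  proof -
    have x: "(zhat_zero, i) \<in> hatD G D I t"
      using inertia_in_hatD[OF subgroup.subset[OF assms(2)] assms(4) i] .
    have comm: "hatD_mult G (zhat_zero, i) (a, t) = hatD_mult G (a, t) (zhat_zero, i)"
      using x a subgroup.subset[OF assms(3)] by (intro hatD_mult_commute) (auto simp: hatD_def)
    have "int p dvd (f i t - (c (a, t) - c (hatD_mult G (zhat_zero, i) (a, t)) + c (zhat_zero, i)))"
      using c[rule_format, OF x a] by (simp add: dvd_eq_mod_eq_0)
    moreover have "int p dvd (f t i - (c (zhat_zero, i) - c (hatD_mult G (a, t) (zhat_zero, i)) + c (a, t)))"
      using c[rule_format, OF a x] by (simp add: dvd_eq_mod_eq_0)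
    ultimately have "int p dvd (f i t - (c (a, t) - c (hatD_mult G (zhat_zero, i) (a, t)) + c (zhat_zero, i)))
        - (f t i - (c (zhat_zero, i) - c (hatD_mult G (a, t) (zhat_zero, i)) + c (a, t)))"
      by (rule dvd_diff)
    then show ?thesis
      by (simp add: comm commutator_form_def)
  qed
  then show ?thesis
    using t by blast
qed

lemma quot_generator_two_generators:
  assumes "finite (carrier G)" "g \<in> carrier G" "h \<in> carrier G"
  shows "quot_generator G (generate G {g, h}) (generate G {g}) h"
  unfolding quot_generator_def
proof (intro conjI ballI)
  show "h \<in> generate G {g, h}"
    by (simp add: generate.incl)
  fix d
  assume "d \<in> generate G {g, h}"
  moreover have "generate G {g, h} \<subseteq> generate G {g} <#> generate G {h}"
  proof (rule generate_subgroup_incl)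
    have "g \<otimes> \<one> \<in> generate G {g} <#> generate G {h}"
      and "\<one> \<otimes> h \<in> generate G {g} <#> generate G {h}"
      unfolding set_mult_def by (blast intro: generate.incl generate.one)+
    then show "{g, h} \<subseteq> generate G {g} <#> generate G {h}"
      using assms by simp
    show "subgroup (generate G {g} <#> generate G {h}) G"
      using assms by (intro mult_subgroups generate_is_subgroup) auto
  qed
  ultimately obtain i k where "i \<in> generate G {g}" "d = i \<otimes> h [^] (k::nat)"
    using generate_pow_on_finite_carrier[OF assms(1,3)] by (auto simp: set_mult_def)
  moreover have "i \<in> carrier G"
    using \<open>i \<in> generate G {g}\<close> generate_incl assms(2) by blast
  ultimately have "d \<otimes> inv (h [^] k) \<in> generate G {g}"
    using assms(3) by (simp add: m_assoc)
  then show "\<exists>k::nat. d \<otimes> inv (h [^] k) \<in> generate G {g}" ..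
qed

lemma two_generator_typical_pair:
  assumes "finite (carrier G)" "g \<in> carrier G" "h \<in> carrier G"
  shows "(generate G {g, h}, generate G {g}) \<in> typical_pairs G"
  using assms quot_generator_two_generators[OF assms]
  unfolding typical_pairs_def by (auto intro: generate.incl)

lemma commutator_form_vanishes:
  assumes fin: "finite (carrier G)" and cocycle: "cocycle2 p (carrier G) (\<otimes>) f"
    and R: "\<forall>(D, I)\<in>typical_pairs G. in_R G p D I f"
    and g: "g \<in> carrier G" and h: "h \<in> carrier G"
  shows "int p dvd commutator_form f g h"
proof -
  define D where "D = generate G {g, h}"
  define I where "I = generate G {g}"
  have "in_R G p D I f"
    using R two_generator_typical_pair[OF fin g h] unfolding D_def I_def by auto
  moreover have "subgroup D G" "subgroup I G"
    unfolding D_def I_def using g h by (auto intro: generate_is_subgroup)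
  moreover have "I \<subseteq> D"
    unfolding D_def I_def by (intro mono_generate) auto
  moreover have "finite D"
    using finite_subset[OF subgroup.subset[OF \<open>subgroup D G\<close>] fin] .
  ultimately obtain t where t: "quot_generator G D I t" and "int p dvd commutator_form f g t"
    using in_R_imp_commutator_form_generator unfolding I_def by (blast intro: generate.incl)
  define K where "K = {x \<in> carrier G. int p dvd commutator_form f g x}"
  have K: "subgroup K G"
    unfolding K_def using subgroup_commutator_form_kernel[OF cocycle g] .
  have "I \<subseteq> K"
    unfolding I_def using g by (intro generate_subgroup_incl[OF _ K]) (simp add: K_def commutator_form_def)
  moreover have tK: "t \<in> K"
    using subgroup.mem_carrier[OF \<open>subgroup D G\<close>] t \<open>int p dvd commutator_form f g t\<close>
    by (simp add: K_def quot_generator_def)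
  moreover obtain k :: nat where "h \<otimes> inv (t [^] k) \<in> I"
    using t unfolding quot_generator_def D_def by (blast intro: generate.incl)
  moreover have "t [^] k \<in> K"
    using subgroup_int_pow_closed[OF K tK, of "int k"] by (simp add: int_pow_int)
  ultimately have "h \<otimes> inv (t [^] k) \<otimes> t [^] k \<in> K"
    using subgroup.m_closed[OF K] by blast
  then show ?thesis
    using h tK by (simp add: K_def m_assoc)
qed

end

section \<open>Splitting off an element that is not a p-th power\<close>

lemma (in group) mem_subgroup_if_coprime_pows:
  assumes N: "subgroup N G" and x: "x \<in> carrier G"
    and "x [^] (i::int) \<in> N" "x [^] (j::int) \<in> N" "coprime i j"
  shows "x \<in> N"
proof -
  obtain u v where "u * i + v * j = 1"
    using bezout_int[of i j] \<open>coprime i j\<close> by auto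
  then have "x = x [^] (i * u + j * v)"
    using x by (simp add: mult.commute)
  also have "\<dots> = (x [^] i) [^] u \<otimes> (x [^] j) [^] v"
    using x by (simp add: int_pow_mult int_pow_pow)
  also have "\<dots> \<in> N"
    using subgroup_int_pow_closed[OF N assms(3)] subgroup_int_pow_closed[OF N assms(4)]
    by (rule subgroup.m_closed[OF N])
  finally show ?thesis .
qed

context comm_group
begin

lemma subgroup_nth_powers: "subgroup ((\<lambda>y. y [^] (n::nat)) ` carrier G) G"
proof (rule subgroupI)
  fix u v
  assume "u \<in> (\<lambda>y. y [^] n) ` carrier G" "v \<in> (\<lambda>y. y [^] n) ` carrier G"
  then obtain y z where "y \<in> carrier G" "z \<in> carrier G" "u = y [^] n" "v = z [^] n"
    by blast
  then have "inv u = inv y [^] n" "u \<otimes> v = (y \<otimes> z) [^] n"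
    by (simp_all add: nat_pow_inv nat_pow_distrib)
  then show "inv u \<in> (\<lambda>y. y [^] n) ` carrier G" "u \<otimes> v \<in> (\<lambda>y. y [^] n) ` carrier G"
    using \<open>y \<in> carrier G\<close> \<open>z \<in> carrier G\<close> by auto
qed auto

lemma subset_set_mult_subgroup:
  assumes "M \<subseteq> carrier G" "subgroup H G"
  shows "M \<subseteq> M <#> H"
  using assms subgroup.one_closed[OF assms(2)]
  by (force simp: set_mult_def intro: bexI[of _ \<one>])

lemma exchange_not_in_set_mult_generate:
  assumes M: "subgroup M G" and p: "Factorial_Ring.prime (p::nat)"
    and a: "a \<in> carrier G" "a \<notin> M"
    and x: "x \<in> carrier G" "x [^] p \<in> M" "x \<notin> M <#> generate G {a}"
  shows "a \<notin> M <#> generate G {x}"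
proof
  assume "a \<in> M <#> generate G {x}"
  then obtain m j where m: "m \<in> M" and amj: "a = m \<otimes> x [^] (j::int)"
    using generate_pow[OF x(1)] by (auto simp: set_mult_def)
  have mG: "m \<in> carrier G"
    using subgroup.mem_carrier[OF M m] .
  show False
  proof (cases "int p dvd j")
    case True
    then obtain q where "j = int p * q" ..
    then have "x [^] j = (x [^] int p) [^] q"
      using x by (simp add: int_pow_pow)
    then have "x [^] j = (x [^] p) [^] q"
      by (simp add: int_pow_int)
    then have "x [^] j \<in> M"
      using subgroup_int_pow_closed[OF M x(2)] by simp
    then show False
      using amj m a(2) subgroup.m_closed[OF M] by metis
  next
    case False
    define N where "N = M <#> generate G {a}"
    have N: "subgroup N G"
      unfolding N_def using M a by (intro mult_subgroups generate_is_subgroup) auto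
    have "x [^] j = inv m \<otimes> a"
      using amj mG x by (simp add: m_assoc [symmetric])
    also have "\<dots> \<in> N"
      using subgroup.m_inv_closed[OF M m] generate.incl[of a "{a}" G]
      unfolding N_def set_mult_def by blast
    finally have "x [^] j \<in> N" .
    moreover have "x [^] int p \<in> N"
      using x(2) subset_set_mult_subgroup[OF subgroup.subset[OF M], of "generate G {a}"] a
      by (auto simp: N_def int_pow_int generate_is_subgroup)
    moreover have "coprime j (int p)"
      using False p prime_imp_coprime[of "int p" j] by (simp add: coprime_commute)
    ultimately have "x \<in> N"
      using mem_subgroup_if_coprime_pows[OF N x(1)] by blast
    then show False
      using x(3) N_def by blast
  qed
qed

lemma maximal_avoiding_subgroup_complement:
  assumes p: "Factorial_Ring.prime (p::nat)" and M: "subgroup M G"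
    and powers: "(\<lambda>y. y [^] p) ` carrier G \<subseteq> M"
    and a: "a \<in> carrier G" "a \<notin> M"
    and maximal: "\<And>M'. subgroup M' G \<Longrightarrow> M \<subseteq> M' \<Longrightarrow> a \<notin> M' \<Longrightarrow> M' = M"
  shows "M <#> generate G {a} = carrier G"
proof
  show "M <#> generate G {a} \<subseteq> carrier G"
    using subgroup.subset[OF M] generate_incl[of "{a}"] a by (intro setmult_subset_G) auto
  show "carrier G \<subseteq> M <#> generate G {a}"
  proof
    fix x
    assume x: "x \<in> carrier G"
    show "x \<in> M <#> generate G {a}"
    proof (rule ccontr)
      assume x_notin: "x \<notin> M <#> generate G {a}"
      have "M <#> generate G {x} = M"
      proof (rule maximal)
        show "subgroup (M <#> generate G {x}) G"
          using M x by (intro mult_subgroups generate_is_subgroup) auto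
        show "M \<subseteq> M <#> generate G {x}"
          using subgroup.subset[OF M] x by (intro subset_set_mult_subgroup generate_is_subgroup) auto
        have "x [^] p \<in> M"
          using powers x by blast
        then show "a \<notin> M <#> generate G {x}"
          using exchange_not_in_set_mult_generate[OF M p a x] x_notin by blast
      qed
      moreover have "\<one> \<otimes> x \<in> M <#> generate G {x}"
        unfolding set_mult_def using subgroup.one_closed[OF M] generate.incl[of x "{x}" G] by blast
      moreover have "M \<subseteq> M <#> generate G {a}"
        using subgroup.subset[OF M] a by (intro subset_set_mult_subgroup generate_is_subgroup) auto
      ultimately show False
        using x x_notin by auto
    qed
  qed
qed

lemma non_pth_power_splits_off:
  assumes fin: "finite (carrier G)" and p: "Factorial_Ring.prime (p::nat)"
    and a: "a \<in> carrier G" and not_power: "\<forall>y\<in>carrier G. y [^] p \<noteq> a"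
  shows "\<exists>M. subgroup M G \<and> a \<notin> M \<and> M <#> generate G {a} = carrier G"
proof -
  define F where "F = {M. subgroup M G \<and> (\<lambda>y. y [^] p) ` carrier G \<subseteq> M \<and> a \<notin> M}"
  have "(\<lambda>y. y [^] p) ` carrier G \<in> F"
    using subgroup_nth_powers not_power by (auto simp: F_def)
  moreover have "finite F"
    by (rule finite_subset[of _ "Pow (carrier G)"]) (auto simp: F_def fin dest: subgroup.subset)
  ultimately obtain M
    where "M \<in> F" and maximal: "\<And>M'. M' \<in> F \<Longrightarrow> M \<subseteq> M' \<Longrightarrow> M = M'"
    using finite_has_maximal[of F] by blast
  then have "subgroup M G" "(\<lambda>y. y [^] p) ` carrier G \<subseteq> M" "a \<notin> M"
    by (auto simp: F_def)
  moreover have "M' = M" if "subgroup M' G" "M \<subseteq> M'" "a \<notin> M'" for M'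
    using maximal[of M'] that \<open>(\<lambda>y. y [^] p) ` carrier G \<subseteq> M\<close> by (auto simp: F_def)
  ultimately show ?thesis
    using maximal_avoiding_subgroup_complement[OF p _ _ a] by blast
qed

end

section \<open>The extension defined by a cocycle\<close>

lemma mod_add_left_mod: "((a::int) mod n + b + c) mod n = (a + b + c) mod n"
  by (metis mod_add_left_eq add.assoc)

lemma mod_add_middle_mod: "((a::int) + b mod n + c) mod n = (a + b + c) mod n"
  by (metis mod_add_left_eq mod_add_right_eq)

text \<open>The central extension of G by \<open>\<int>/p\<close> defined by f, with \<open>\<int>/p\<close> represented
  by \<open>{0..<p}\<close>.\<close>

definition ext_group ::
    "('g, 'b) monoid_scheme \<Rightarrow> nat \<Rightarrow> ('g \<Rightarrow> 'g \<Rightarrow> int) \<Rightarrow> (int \<times> 'g) monoid" where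
  "ext_group G p f =
    \<lparr>carrier = {0..<int p} \<times> carrier G,
     monoid.mult = (\<lambda>x y. ((fst x + fst y + f (snd x) (snd y)) mod int p, snd x \<otimes>\<^bsub>G\<^esub> snd y)),
     one = (0, \<one>\<^bsub>G\<^esub>)\<rparr>"

lemma ext_group_simps:
  "carrier (ext_group G p f) = {0..<int p} \<times> carrier G"
  "x \<otimes>\<^bsub>ext_group G p f\<^esub> y =
    ((fst x + fst y + f (snd x) (snd y)) mod int p, snd x \<otimes>\<^bsub>G\<^esub> snd y)"
  "\<one>\<^bsub>ext_group G p f\<^esub> = (0, \<one>\<^bsub>G\<^esub>)"
  by (simp_all add: ext_group_def)

lemma snd_hom_ext_group: "snd \<in> hom (ext_group G p f) G"
  by (auto simp: hom_def ext_group_simps)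

lemma (in group) nat_pow_in_generate: "h \<in> carrier G \<Longrightarrow> h [^] (n::nat) \<in> generate G {h}"
  using generate_pow[of h] by (auto simp flip: int_pow_int)

context comm_group
begin

lemma ext_group_central_pow:
  assumes "f \<one> \<one> = 0"
  shows "(w, \<one>) [^]\<^bsub>ext_group G p f\<^esub> (n::nat) = ((int n * w) mod int p, \<one>)"
  by (induction n) (simp_all add: ext_group_simps assms mod_add_right_eq algebra_simps)

lemma ext_group_comm_group:
  assumes p: "p > 1" and cocycle: "cocycle2 p (carrier G) (\<otimes>) f"
    and symmetric: "\<forall>x\<in>carrier G. \<forall>y\<in>carrier G. int p dvd commutator_form f x y"
    and normalized: "f \<one> \<one> = 0"
  shows "comm_group (ext_group G p f)"
proof (rule comm_groupI)
  let ?E = "ext_group G p f"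
  show "\<one>\<^bsub>?E\<^esub> \<in> carrier ?E"
    using p by (simp add: ext_group_simps)
  fix x y z
  assume x: "x \<in> carrier ?E" and y: "y \<in> carrier ?E" and z: "z \<in> carrier ?E"
  obtain u g v h w k where xyz: "x = (u, g)" "y = (v, h)" "z = (w, k)"
    by (cases x, cases y, cases z) blast
  have G: "g \<in> carrier G" "h \<in> carrier G" "k \<in> carrier G"
    using x y z xyz by (auto simp: ext_group_simps)
  show "x \<otimes>\<^bsub>?E\<^esub> y \<in> carrier ?E"
    using p x y by (auto simp: ext_group_simps)
  have "int p dvd (f h k - f (g \<otimes> h) k + f g (h \<otimes> k) - f g h)"
    using cocycle2_dvd[OF cocycle G] .
  then have "(u + v + f g h + w + f (g \<otimes> h) k) mod int p
      = (u + (v + w + f h k) + f g (h \<otimes> k)) mod int p"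
    by (simp add: mod_eq_dvd_iff algebra_simps dvd_diff_commute)
  then show "x \<otimes>\<^bsub>?E\<^esub> y \<otimes>\<^bsub>?E\<^esub> z = x \<otimes>\<^bsub>?E\<^esub> (y \<otimes>\<^bsub>?E\<^esub> z)"
    using G by (simp add: ext_group_simps xyz mod_add_left_mod mod_add_middle_mod m_assoc)
  have "int p dvd f \<one> g"
    using cocycle2_dvd[OF cocycle one_closed one_closed G(1)] normalized G(1) by simp
  then have "(u + f \<one> g) mod int p = u mod int p"
    by (simp add: mod_eq_dvd_iff)
  then show "\<one>\<^bsub>?E\<^esub> \<otimes>\<^bsub>?E\<^esub> x = x"
    using x G by (simp add: ext_group_simps xyz)
  show "x \<otimes>\<^bsub>?E\<^esub> y = y \<otimes>\<^bsub>?E\<^esub> x"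
    using symmetric G
    by (simp add: ext_group_simps xyz commutator_form_def mod_eq_dvd_iff m_comm add.commute add.left_commute)
  show "\<exists>y\<in>carrier ?E. y \<otimes>\<^bsub>?E\<^esub> x = \<one>\<^bsub>?E\<^esub>"
    using p G by (intro bexI[of _ "((- u - f (inv g) g) mod int p, inv g)"])
      (auto simp: ext_group_simps xyz mod_add_left_mod)
qed

lemma ext_group_lift_pow:
  assumes h: "h \<in> carrier G" and normalized: "f \<one> \<one> = 0"
    and d: "\<forall>x\<in>generate G {h}. \<forall>y\<in>generate G {h}. int p dvd (d x + d y + f x y - d (x \<otimes> y))"
  shows "(d h mod int p, h) [^]\<^bsub>ext_group G p f\<^esub> (n::nat) = (d (h [^] n) mod int p, h [^] n)"
proof (induction n)
  case 0
  have "int p dvd (d \<one> + d \<one> + f \<one> \<one> - d (\<one> \<otimes> \<one>))"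
    using d generate.one[of G "{h}"] by blast
  then show ?case
    using normalized by (simp add: ext_group_simps dvd_eq_mod_eq_0)
next
  case (Suc n)
  have "h [^] n \<in> generate G {h}"
    using h by (rule nat_pow_in_generate)
  then have "int p dvd (d (h [^] n) + d h + f (h [^] n) h - d (h [^] n \<otimes> h))"
    using d generate.incl[of h "{h}" G] by blast
  then have "(d (h [^] n) + d h + f (h [^] n) h) mod int p = d (h [^] n \<otimes> h) mod int p"
    by (simp add: mod_eq_dvd_iff)
  then show ?case
    using Suc h by (simp add: ext_group_simps mod_add_left_mod mod_add_middle_mod)
qed

lemma ext_group_central_not_pth_power:
  assumes p: "p > 1" and E: "comm_group (ext_group G p f)" and normalized: "f \<one> \<one> = 0"
    and cyclic: "\<forall>h\<in>carrier G. coboundary2 p (generate G {h}) (\<otimes>) f"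
    and y: "y \<in> carrier (ext_group G p f)"
  shows "y [^]\<^bsub>ext_group G p f\<^esub> p \<noteq> (1, \<one>)"
proof
  let ?E = "ext_group G p f"
  assume y_p: "y [^]\<^bsub>?E\<^esub> p = (1, \<one>)"
  interpret E: comm_group ?E by (rule E)
  interpret snd: group_hom ?E G snd
    by (simp add: group_hom_def group_hom_axioms_def E.is_group is_group snd_hom_ext_group)
  obtain u h where y_uh: "y = (u, h)" and h: "h \<in> carrier G"
    using y by (auto simp: ext_group_simps)
  have "h [^] p = \<one>"
    using snd.hom_nat_pow[OF y, of p] y_p y_uh by simp
  obtain d
    where d: "\<forall>x\<in>generate G {h}. \<forall>y\<in>generate G {h}. int p dvd (d x + d y + f x y - d (x \<otimes> y))"
    using cyclic h by (auto simp: coboundary2_iff_lift)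
  define z where "z = (d h mod int p, h)"
  have z: "z \<in> carrier ?E"
    using p h by (simp add: ext_group_simps z_def)
  have "int p dvd (d \<one> + d \<one> + f \<one> \<one> - d (\<one> \<otimes> \<one>))"
    using d generate.one[of G "{h}"] by blast
  then have "z [^]\<^bsub>?E\<^esub> p = \<one>\<^bsub>?E\<^esub>"
    using ext_group_lift_pow[OF h normalized d, of p] \<open>h [^] p = \<one>\<close> normalized
    by (simp add: ext_group_simps z_def dvd_eq_mod_eq_0)
  define k where "k = y \<otimes>\<^bsub>?E\<^esub> inv\<^bsub>?E\<^esub> z"
  have k: "k \<in> carrier ?E"
    unfolding k_def using y z by simp
  have "snd k = \<one>"
    unfolding k_def using y z h y_uh by (simp add: snd.hom_mult snd.hom_inv z_def)
  then obtain w where "k = (w, \<one>)"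
    by (cases k) simp
  then have "k [^]\<^bsub>?E\<^esub> p = \<one>\<^bsub>?E\<^esub>"
    using ext_group_central_pow[where f = f and w = w and n = p, OF normalized] by (simp add: ext_group_simps)
  moreover have "y = k \<otimes>\<^bsub>?E\<^esub> z"
    unfolding k_def using y z by (simp add: E.m_assoc)
  ultimately have "y [^]\<^bsub>?E\<^esub> p = \<one>\<^bsub>?E\<^esub>"
    using \<open>z [^]\<^bsub>?E\<^esub> p = \<one>\<^bsub>?E\<^esub>\<close> k z by (simp add: E.nat_pow_distrib)
  then show False
    using y_p by (simp add: ext_group_simps)
qed

lemma ext_group_inj_on_snd_complement:
  assumes p: "Factorial_Ring.prime p" and E: "comm_group (ext_group G p f)" and normalized: "f \<one> \<one> = 0"
    and M: "subgroup M (ext_group G p f)" and aM: "(1, \<one>) \<notin> M"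
  shows "inj_on snd M"
proof
  let ?E = "ext_group G p f" and ?a = "(1::int, \<one>)"
  interpret E: comm_group ?E by (rule E)
  interpret snd: group_hom ?E G snd
    by (simp add: group_hom_def group_hom_axioms_def E.is_group is_group snd_hom_ext_group)
  have a: "?a \<in> carrier ?E"
    using p prime_gt_1_nat by (simp add: ext_group_simps)
  have a_pow: "?a [^]\<^bsub>?E\<^esub> (n::nat) = (int n mod int p, \<one>)" for n
    using ext_group_central_pow[where f = f and w = 1 and n = n, OF normalized] by simp
  fix m1 m2
  assume m12: "m1 \<in> M" "m2 \<in> M" "snd m1 = snd m2"
  have m12E: "m1 \<in> carrier ?E" "m2 \<in> carrier ?E"
    using subgroup.mem_carrier[OF M] m12 by blast+
  define d where "d = m1 \<otimes>\<^bsub>?E\<^esub> inv\<^bsub>?E\<^esub> m2"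
  have dM: "d \<in> M"
    unfolding d_def using M m12 by (simp add: subgroup.m_closed subgroup.m_inv_closed)
  have "snd d = \<one>"
    unfolding d_def using m12E m12(3) by (simp add: snd.hom_mult snd.hom_inv)
  moreover have "d \<in> carrier ?E"
    using subgroup.mem_carrier[OF M dM] .
  ultimately obtain w where d_w: "d = (w, \<one>)" and w: "0 \<le> w" "w < int p"
    by (cases d) (auto simp: ext_group_simps)
  have "w = 0"
  proof (rule ccontr)
    assume "w \<noteq> 0"
    then have "\<not> int p dvd w"
      using w zdvd_not_zless by fastforce
    then have "coprime w (int p)"
      using p prime_imp_coprime[of "int p" w] by (simp add: coprime_commute)
    moreover have "?a [^]\<^bsub>?E\<^esub> w \<in> M"
      using dM d_w w a_pow[of "nat w"] int_pow_int[of ?E ?a "nat w"] by simp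
    moreover have "?a [^]\<^bsub>?E\<^esub> int p \<in> M"
      using subgroup.one_closed[OF M] by (simp add: a_pow int_pow_int ext_group_simps)
    ultimately have "?a \<in> M"
      using E.mem_subgroup_if_coprime_pows[OF M a] by blast
    then show False
      using aM by simp
  qed
  then have "d = \<one>\<^bsub>?E\<^esub>"
    using d_w by (simp add: ext_group_simps)
  then have "inv\<^bsub>?E\<^esub> (inv\<^bsub>?E\<^esub> m2) = m1"
    using m12E unfolding d_def by (intro E.inv_equality) auto
  then show "m1 = m2"
    using m12E by simp
qed

lemma ext_group_snd_image_complement:
  assumes p: "Factorial_Ring.prime p" and E: "comm_group (ext_group G p f)" and M: "subgroup M (ext_group G p f)"
    and split: "M <#>\<^bsub>ext_group G p f\<^esub> generate (ext_group G p f) {(1, \<one>)}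
      = carrier (ext_group G p f)"
  shows "snd ` M = carrier G"
proof
  let ?E = "ext_group G p f" and ?a = "(1::int, \<one>)"
  interpret E: comm_group ?E by (rule E)
  interpret snd: group_hom ?E G snd
    by (simp add: group_hom_def group_hom_axioms_def E.is_group is_group snd_hom_ext_group)
  show "snd ` M \<subseteq> carrier G"
    using subgroup.subset[OF M] by (auto simp: ext_group_simps)
  have "?a \<in> carrier ?E"
    using p prime_gt_1_nat by (simp add: ext_group_simps)
  then have "generate ?E {?a} \<subseteq> kernel ?E G snd"
    by (intro E.generate_subgroup_incl snd.subgroup_kernel) (simp add: kernel_def)
  then have snd_gen: "snd k = \<one>" if "k \<in> generate ?E {?a}" for k
    using that by (auto simp: kernel_def)
  show "carrier G \<subseteq> snd ` M"
  proof
    fix h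
    assume h: "h \<in> carrier G"
    then have "(0, h) \<in> M <#>\<^bsub>?E\<^esub> generate ?E {?a}"
      using split E.one_closed by (simp add: ext_group_simps)
    then obtain m k where m: "m \<in> M" and k: "k \<in> generate ?E {?a}" and "(0, h) = m \<otimes>\<^bsub>?E\<^esub> k"
      unfolding set_mult_def by blast
    then have "snd m = h"
      using snd_gen[OF k] subgroup.mem_carrier[OF M m] by (auto simp: ext_group_simps)
    then show "h \<in> snd ` M"
      using m by blast
  qed
qed

lemma coboundary_if_ext_group_splits:
  assumes p: "Factorial_Ring.prime p" and E: "comm_group (ext_group G p f)" and normalized: "f \<one> \<one> = 0"
    and M: "subgroup M (ext_group G p f)" and aM: "(1, \<one>) \<notin> M"
    and split: "M <#>\<^bsub>ext_group G p f\<^esub> generate (ext_group G p f) {(1, \<one>)}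
      = carrier (ext_group G p f)"
  shows "coboundary2 p (carrier G) (\<otimes>) f"
proof -
  let ?E = "ext_group G p f"
  have inj: "inj_on snd M"
    using ext_group_inj_on_snd_complement[OF p E normalized M aM] .
  have image: "snd ` M = carrier G"
    using ext_group_snd_image_complement[OF p E M split] .
  define s where "s = the_inv_into M snd"
  have s: "s h \<in> M" "snd (s h) = h" if "h \<in> carrier G" for h
    unfolding s_def using that inj image by (auto intro: the_inv_into_into f_the_inv_into_f)
  have "int p dvd (fst (s g) + fst (s h) + f g h - fst (s (g \<otimes> h)))"
    if g: "g \<in> carrier G" and h: "h \<in> carrier G" for g h
  proof -
    have "s g \<otimes>\<^bsub>?E\<^esub> s h \<in> M"
      using s g h M by (simp add: subgroup.m_closed)
    moreover have "snd (s g \<otimes>\<^bsub>?E\<^esub> s h) = snd (s (g \<otimes> h))"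
      using s g h by (simp add: ext_group_simps)
    ultimately have "s g \<otimes>\<^bsub>?E\<^esub> s h = s (g \<otimes> h)"
      using inj_onD[OF inj] s(1)[of "g \<otimes> h"] g h by blast
    moreover have "s (g \<otimes> h) \<in> carrier ?E"
      using s g h subgroup.mem_carrier[OF M] by simp
    ultimately have "(fst (s g) + fst (s h) + f g h) mod int p = fst (s (g \<otimes> h)) mod int p"
      using s g h by (auto simp: ext_group_simps)
    then show ?thesis
      by (simp add: mod_eq_dvd_iff)
  qed
  then show ?thesis
    unfolding coboundary2_iff_lift by (auto intro!: exI[of _ "\<lambda>h. fst (s h)"])
qed

lemma coboundary_if_normalized_commutator_form_vanishes:
  assumes fin: "finite (carrier G)" and p: "Factorial_Ring.prime p"
    and cocycle: "cocycle2 p (carrier G) (\<otimes>) f"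
    and symmetric: "\<forall>x\<in>carrier G. \<forall>y\<in>carrier G. int p dvd commutator_form f x y"
    and normalized: "f \<one> \<one> = 0"
    and cyclic: "\<forall>h\<in>carrier G. coboundary2 p (generate G {h}) (\<otimes>) f"
  shows "coboundary2 p (carrier G) (\<otimes>) f"
proof -
  let ?E = "ext_group G p f" and ?a = "(1::int, \<one>)"
  have p1: "p > 1"
    using p prime_gt_1_nat by blast
  have E: "comm_group ?E"
    using ext_group_comm_group[OF p1 cocycle symmetric normalized] .
  interpret E: comm_group ?E by (rule E)
  have "finite (carrier ?E)"
    using fin by (simp add: ext_group_simps)
  moreover have "?a \<in> carrier ?E"
    using p1 by (simp add: ext_group_simps)
  moreover have "\<forall>y\<in>carrier ?E. y [^]\<^bsub>?E\<^esub> p \<noteq> ?a"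
    using ext_group_central_not_pth_power[OF p1 E normalized cyclic] by blast
  ultimately obtain M where "subgroup M ?E" "?a \<notin> M" "M <#>\<^bsub>?E\<^esub> generate ?E {?a} = carrier ?E"
    using E.non_pth_power_splits_off[OF _ p] by blast
  then show ?thesis
    using coboundary_if_ext_group_splits[OF p E normalized] by blast
qed

lemma coboundary_if_commutator_form_vanishes:
  assumes fin: "finite (carrier G)" and p: "Factorial_Ring.prime p"
    and cocycle: "cocycle2 p (carrier G) (\<otimes>) f"
    and symmetric: "\<forall>x\<in>carrier G. \<forall>y\<in>carrier G. int p dvd commutator_form f x y"
    and cyclic: "\<forall>h\<in>carrier G. coboundary2 p (generate G {h}) (\<otimes>) f"
  shows "coboundary2 p (carrier G) (\<otimes>) f"
proof -
  define f\<^sub>0 where "f\<^sub>0 = (\<lambda>x y. f x y - f \<one> \<one>)"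
  have "coboundary2 p (carrier G) (\<otimes>) f\<^sub>0"
    using assms unfolding f\<^sub>0_def
    by (intro coboundary_if_normalized_commutator_form_vanishes)
      (simp_all add: cocycle2_diff_const coboundary2_diff_const)
  then show ?thesis
    by (simp add: f\<^sub>0_def coboundary2_diff_const)
qed

end

theorem mainTheorem13:
  fixes H :: "('g,'b) monoid_scheme" and p :: nat and f :: "'g \<Rightarrow> 'g \<Rightarrow> int"
  assumes "comm_group H" and "finite (carrier H)"
    and "Factorial_Ring.prime p" and "\<exists>k. order H = p ^ k"
    and "cocycle2 p (carrier H) (\<lambda>x y. x \<otimes>\<^bsub>H\<^esub> y) f"
    and "\<forall>(D, I)\<in>typical_pairs H. in_R H p D I f"
  shows "coboundary2 p (carrier H) (\<lambda>x y. x \<otimes>\<^bsub>H\<^esub> y) f"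
proof -
  interpret H: comm_group H by fact
  show ?thesis
    using H.coboundary_if_commutator_form_vanishes[OF assms(2,3,5)]
      H.commutator_form_vanishes[OF assms(2,5,6)] H.coboundary_on_cyclic_subgroups[OF assms(6)]
    by blast
qed

end
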